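(* Let $\gamma\in(0,1)$, $\alpha>0$, $\mu=\frac{1-\gamma}{\gamma}\alpha$, $\sigma>0$, let $p_{\rm in}(r)=C e^{-r^2/(2\sigma^2)}$ be a Gaussian inlier ray density on $[0,\infty)$ with $\mu<p_{\rm in}(0)$, and let $\tau>0$ solve $p_{\rm in}(\tau)=\mu$. Let $r(x_i,\theta)\ge0$ be residuals of observations $x_i$, $i=1,\dots,n$, with respect to model $\theta$. For maximizing the marginal likelihood $\sum_i\log(\gamma p_{\rm in}(r(x_i,\theta))+(1-\gamma)\alpha)$ in $\theta$ with $\gamma,\alpha$ fixed, the EM iteration and the IRLS iteration (for $\rho(r)=\operatorname{smax}(\frac{\tau^2-r^2}{2\sigma^2},0)$, update $\theta^{t+1}=\arg\min_\theta\sum_i w_i^t r(x_i,\theta)^2$ with $w_i^t=-\rho'(r_i^t)/r_i^t$, $r_i^t=r(x_i,\theta^t)$) coincide, and the update is $$q_i^t=p(k_i{=}1\mid r(x_i,\theta^t)),\qquad \theta^{t+1}=\arg\min_\theta\sum_{i=1}^n q_i^t\, r(x_i,\theta)^2,$$ where $p(k{=}1\mid r)=\frac{\gamma p_{\rm in}(r)}{\gamma p_{\rm in}(r)+(1-\gamma)\alpha}=\operatorname{sigm}\big(\frac{\tau^2-r^2}{2\sigma^2}\big)$.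
   Context: EM iteration: E-step computes posterior inlier probabilities $q_i^t$ at $\theta^t$; M-step maximizes $\sum_i[q_i^t\log(\gamma p_{\rm in}(r(x_i,\theta)))+(1-q_i^t)\log((1-\gamma)\alpha)]$ over $\theta$. $\operatorname{sigm}(x)=1/(1+e^{-x})$, $\operatorname{smax}(x,y)=\log(e^x+e^y)$; $k_i$ is the inlier indicator. *)

theory Defs
  imports "HOL-Analysis.Analysis"
begin

definition sigm :: "real \<Rightarrow> real" where
  "sigm x = 1 / (1 + exp (- x))"

definition smax :: "real \<Rightarrow> real \<Rightarrow> real" where
  "smax x y = ln (exp x + exp y)"

definition gauss_pin :: "real \<Rightarrow> real \<Rightarrow> real \<Rightarrow> real" where
  "gauss_pin C \<sigma> r = C * exp (- (r\<^sup>2) / (2 * \<sigma>\<^sup>2))"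

definition posterior :: "real \<Rightarrow> real \<Rightarrow> (real \<Rightarrow> real) \<Rightarrow> real \<Rightarrow> real" where
  "posterior \<gamma> \<alpha> pin r = \<gamma> * pin r / (\<gamma> * pin r + (1 - \<gamma>) * \<alpha>)"

definition em_objective ::
  "real \<Rightarrow> real \<Rightarrow> (real \<Rightarrow> real) \<Rightarrow> ('x \<Rightarrow> 'm \<Rightarrow> real) \<Rightarrow> (nat \<Rightarrow> 'x) \<Rightarrow> nat \<Rightarrow> 'm \<Rightarrow> 'm \<Rightarrow> real" where
  "em_objective \<gamma> \<alpha> pin res xs n \<theta>t \<theta> =
     (\<Sum>i<n. posterior \<gamma> \<alpha> pin (res (xs i) \<theta>t) * ln (\<gamma> * pin (res (xs i) \<theta>))
           + (1 - posterior \<gamma> \<alpha> pin (res (xs i) \<theta>t)) * ln ((1 - \<gamma>) * \<alpha>))"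

definition argmax_set :: "('m \<Rightarrow> real) \<Rightarrow> 'm set" where
  "argmax_set f = {\<theta>. \<forall>\<theta>'. f \<theta>' \<le> f \<theta>}"

definition argmin_set :: "('m \<Rightarrow> real) \<Rightarrow> 'm set" where
  "argmin_set f = {\<theta>. \<forall>\<theta>'. f \<theta> \<le> f \<theta>'}"

definition irls_weight :: "(real \<Rightarrow> real) \<Rightarrow> real \<Rightarrow> real" where
  "irls_weight \<rho> r =
     (if r > 0 then - deriv \<rho> r / r
      else Lim (at_right 0) (\<lambda>s. - deriv \<rho> s / s))"

definition irls_objective ::
  "(real \<Rightarrow> real) \<Rightarrow> ('x \<Rightarrow> 'm \<Rightarrow> real) \<Rightarrow> (nat \<Rightarrow> 'x) \<Rightarrow> nat \<Rightarrow> 'm \<Rightarrow> 'm \<Rightarrow> real" where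
  "irls_objective \<rho> res xs n \<theta>t \<theta> =
     (\<Sum>i<n. irls_weight \<rho> (res (xs i) \<theta>t) * (res (xs i) \<theta>)\<^sup>2)"

definition rho_tau :: "real \<Rightarrow> real \<Rightarrow> real \<Rightarrow> real" where
  "rho_tau \<tau> \<sigma> r = smax ((\<tau>\<^sup>2 - r\<^sup>2) / (2 * \<sigma>\<^sup>2)) 0"

end

theory Submission
  imports Defs
begin

text \<open>Since \<open>\<mu> = p\<^sub>i\<^sub>n(\<tau>)\<close>, the posterior is \<open>\<gamma>p(r) / (\<gamma>p(r) + \<gamma>p(\<tau>))\<close>, i.e. the sigmoid of the
  log-ratio \<open>ln p(r) - ln p(\<tau>) = (\<tau>\<^sup>2 - r\<^sup>2)/(2\<sigma>\<^sup>2)\<close>. Because \<open>ln (\<gamma> p(r))\<close> is affine in \<open>r\<^sup>2\<close>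
  with slope \<open>-1/(2\<sigma>\<^sup>2)\<close>, the M-step objective is a constant minus a positive multiple of
  the \<open>q\<close>-weighted least-squares cost. On the other side \<open>\<rho>'(r) = -(r/\<sigma>\<^sup>2) sigm((\<tau>\<^sup>2 - r\<^sup>2)/(2\<sigma>\<^sup>2))\<close>,
  so the IRLS weights are \<open>q\<^sub>i/\<sigma>\<^sup>2\<close>. Positive rescaling does not change the optimisers.\<close>

lemma sigm_diff_eq: "sigm (x - y) = exp x / (exp x + exp y)"
  unfolding sigm_def by (simp add: exp_diff field_simps add_pos_pos)

lemma posterior_eq_sigm_log_odds:
  assumes "0 < \<gamma>" "\<gamma> < 1" "0 < \<alpha>" "0 < pin r"
  shows "posterior \<gamma> \<alpha> pin r = sigm (ln (\<gamma> * pin r) - ln ((1 - \<gamma>) * \<alpha>))"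
  using assms by (simp add: sigm_diff_eq posterior_def)

lemma ln_gauss_pin:
  assumes "0 < C"
  shows "ln (gauss_pin C \<sigma> r) = ln C - r\<^sup>2 / (2 * \<sigma>\<^sup>2)"
  using assms by (simp add: gauss_pin_def ln_mult)

lemma posterior_gauss_pin_eq_sigm:
  assumes "0 < \<gamma>" "\<gamma> < 1" "0 < \<alpha>" "0 < C"
    and threshold: "gauss_pin C \<sigma> \<tau> = (1 - \<gamma>) / \<gamma> * \<alpha>"
  shows "posterior \<gamma> \<alpha> (gauss_pin C \<sigma>) r = sigm ((\<tau>\<^sup>2 - r\<^sup>2) / (2 * \<sigma>\<^sup>2))"
proof -
  have pos: "0 < gauss_pin C \<sigma> s" for s
    using \<open>0 < C\<close> by (simp add: gauss_pin_def)
  have outlier: "(1 - \<gamma>) * \<alpha> = \<gamma> * gauss_pin C \<sigma> \<tau>"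
    using threshold \<open>0 < \<gamma>\<close> by simp
  have "ln (\<gamma> * gauss_pin C \<sigma> r) - ln ((1 - \<gamma>) * \<alpha>)
      = ln (gauss_pin C \<sigma> r) - ln (gauss_pin C \<sigma> \<tau>)"
    unfolding outlier using ln_mult_pos[OF \<open>0 < \<gamma>\<close> pos] by simp
  also have "\<dots> = (\<tau>\<^sup>2 - r\<^sup>2) / (2 * \<sigma>\<^sup>2)"
    using \<open>0 < C\<close> by (simp add: ln_gauss_pin diff_divide_distrib)
  finally show ?thesis
    using assms pos by (simp add: posterior_eq_sigm_log_odds)
qed

lemma argmin_set_scale:
  fixes f :: "'m \<Rightarrow> real"
  assumes "0 < c"
  shows "argmin_set (\<lambda>\<theta>. c * f \<theta>) = argmin_set f"
  unfolding argmin_set_def using assms by auto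

lemma argmax_set_const_minus_scale:
  fixes f :: "'m \<Rightarrow> real"
  assumes "0 < c"
  shows "argmax_set (\<lambda>\<theta>. K - c * f \<theta>) = argmin_set f"
  unfolding argmin_set_def argmax_set_def using assms by auto

lemma em_objective_gauss_pin:
  fixes \<gamma> \<alpha> \<sigma> C :: real and res :: "'x \<Rightarrow> 'm \<Rightarrow> real" and xs :: "nat \<Rightarrow> 'x" and \<theta>t :: 'm
  assumes "0 < \<gamma>" "0 < C"
  defines "q i \<equiv> posterior \<gamma> \<alpha> (gauss_pin C \<sigma>) (res (xs i) \<theta>t)"
  shows "em_objective \<gamma> \<alpha> (gauss_pin C \<sigma>) res xs n \<theta>t
    = (\<lambda>\<theta>. (\<Sum>i<n. q i * ln (\<gamma> * C) + (1 - q i) * ln ((1 - \<gamma>) * \<alpha>))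
      - 1 / (2 * \<sigma>\<^sup>2) * (\<Sum>i<n. q i * (res (xs i) \<theta>)\<^sup>2))"
proof
  fix \<theta>
  have ln_inlier: "ln (\<gamma> * gauss_pin C \<sigma> s) = ln (\<gamma> * C) - 1 / (2 * \<sigma>\<^sup>2) * s\<^sup>2" for s
    using assms by (simp add: ln_mult ln_gauss_pin gauss_pin_def)
  have "em_objective \<gamma> \<alpha> (gauss_pin C \<sigma>) res xs n \<theta>t \<theta>
    = (\<Sum>i<n. (q i * ln (\<gamma> * C) + (1 - q i) * ln ((1 - \<gamma>) * \<alpha>))
        - 1 / (2 * \<sigma>\<^sup>2) * (q i * (res (xs i) \<theta>)\<^sup>2))"
    unfolding em_objective_def q_def ln_inlier by (rule sum.cong) (simp_all add: algebra_simps)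
  then show "em_objective \<gamma> \<alpha> (gauss_pin C \<sigma>) res xs n \<theta>t \<theta>
    = (\<Sum>i<n. q i * ln (\<gamma> * C) + (1 - q i) * ln ((1 - \<gamma>) * \<alpha>))
      - 1 / (2 * \<sigma>\<^sup>2) * (\<Sum>i<n. q i * (res (xs i) \<theta>)\<^sup>2)"
    by (simp add: sum_subtractf sum_distrib_left)
qed

lemma smax_zero_has_real_derivative: "((\<lambda>x. smax x 0) has_real_derivative sigm x) (at x)"
proof -
  have "((\<lambda>x. ln (exp x + 1)) has_real_derivative exp x / (exp x + 1)) (at x)"
    by (auto intro!: derivative_eq_intros simp: add_pos_pos)
  then show ?thesis
    using sigm_diff_eq[of x 0] by (simp add: smax_def)
qed

lemma deriv_rho_tau:
  assumes "\<sigma> \<noteq> 0"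
  shows "deriv (rho_tau \<tau> \<sigma>) s = - s / \<sigma>\<^sup>2 * sigm ((\<tau>\<^sup>2 - s\<^sup>2) / (2 * \<sigma>\<^sup>2))"
proof (rule DERIV_imp_deriv)
  have "((\<lambda>s. (\<tau>\<^sup>2 - s\<^sup>2) / (2 * \<sigma>\<^sup>2)) has_real_derivative - s / \<sigma>\<^sup>2) (at s)"
    using assms by (auto intro!: derivative_eq_intros simp: field_simps power2_eq_square)
  from DERIV_chain2[OF smax_zero_has_real_derivative this]
  show "(rho_tau \<tau> \<sigma> has_real_derivative - s / \<sigma>\<^sup>2 * sigm ((\<tau>\<^sup>2 - s\<^sup>2) / (2 * \<sigma>\<^sup>2))) (at s)"
    unfolding rho_tau_def[abs_def] by (simp add: mult.commute)
qed

lemma irls_weight_eq_continuous_extension: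
  assumes agree: "\<And>s. 0 < s \<Longrightarrow> - deriv \<rho> s / s = w s"
    and "isCont w 0" and "0 \<le> r"
  shows "irls_weight \<rho> r = w r"
proof (cases "r = 0")
  case True
  have "(w \<longlongrightarrow> w 0) (at_right 0)"
    using \<open>isCont w 0\<close> by (simp add: isCont_def filterlim_at_split)
  moreover have "\<forall>\<^sub>F s in at_right 0. w s = - deriv \<rho> s / s"
    using eventually_at_right_less[of "0 :: real"] by (rule eventually_mono) (metis agree)
  ultimately have "((\<lambda>s. - deriv \<rho> s / s) \<longlongrightarrow> w 0) (at_right 0)"
    by (rule Lim_transform_eventually)
  then show ?thesis
    using True by (simp add: irls_weight_def tendsto_Lim)
next
  case False
  then show ?thesis
    using \<open>0 \<le> r\<close> agree by (simp add: irls_weight_def)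
qed

lemma irls_weight_rho_tau:
  assumes "0 < \<sigma>" "0 \<le> r"
  shows "irls_weight (rho_tau \<tau> \<sigma>) r = sigm ((\<tau>\<^sup>2 - r\<^sup>2) / (2 * \<sigma>\<^sup>2)) / \<sigma>\<^sup>2"
proof (rule irls_weight_eq_continuous_extension[OF _ _ \<open>0 \<le> r\<close>])
  show "- deriv (rho_tau \<tau> \<sigma>) s / s = sigm ((\<tau>\<^sup>2 - s\<^sup>2) / (2 * \<sigma>\<^sup>2)) / \<sigma>\<^sup>2" if "0 < s" for s
    using that \<open>0 < \<sigma>\<close> by (simp add: deriv_rho_tau)
  have "1 + exp (- x) \<noteq> 0" for x :: real
    using exp_gt_zero[of "- x"] by linarith
  then show "isCont (\<lambda>s. sigm ((\<tau>\<^sup>2 - s\<^sup>2) / (2 * \<sigma>\<^sup>2)) / \<sigma>\<^sup>2) 0"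
    unfolding sigm_def using \<open>0 < \<sigma>\<close> by (auto intro!: continuous_intros)
qed

text \<open>The hypotheses \<open>\<mu> < p\<^sub>i\<^sub>n(0)\<close> and \<open>0 < \<tau>\<close> only ensure that \<open>\<tau>\<close> exists; the proof does not use them.\<close>
theorem proposition6:
  fixes \<gamma> \<alpha> \<sigma> C \<tau> :: real
    and res :: "'x \<Rightarrow> 'm \<Rightarrow> real" and xs :: "nat \<Rightarrow> 'x" and n :: nat and \<theta>t :: 'm
  assumes "0 < \<gamma>" and "\<gamma> < 1" and "0 < \<alpha>" and "0 < \<sigma>" and "0 < C"
    and "(1 - \<gamma>) / \<gamma> * \<alpha> < gauss_pin C \<sigma> 0"
    and "0 < \<tau>" and "gauss_pin C \<sigma> \<tau> = (1 - \<gamma>) / \<gamma> * \<alpha>"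
    and "\<forall>x \<theta>. 0 \<le> res x \<theta>"
  shows "(\<forall>r\<ge>0. posterior \<gamma> \<alpha> (gauss_pin C \<sigma>) r = sigm ((\<tau>\<^sup>2 - r\<^sup>2) / (2 * \<sigma>\<^sup>2)))
    \<and> argmax_set (em_objective \<gamma> \<alpha> (gauss_pin C \<sigma>) res xs n \<theta>t)
        = argmin_set (\<lambda>\<theta>. \<Sum>i<n. posterior \<gamma> \<alpha> (gauss_pin C \<sigma>) (res (xs i) \<theta>t) * (res (xs i) \<theta>)\<^sup>2)
    \<and> argmin_set (irls_objective (rho_tau \<tau> \<sigma>) res xs n \<theta>t)
        = argmin_set (\<lambda>\<theta>. \<Sum>i<n. posterior \<gamma> \<alpha> (gauss_pin C \<sigma>) (res (xs i) \<theta>t) * (res (xs i) \<theta>)\<^sup>2)"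
proof -
  have post: "posterior \<gamma> \<alpha> (gauss_pin C \<sigma>) r = sigm ((\<tau>\<^sup>2 - r\<^sup>2) / (2 * \<sigma>\<^sup>2))" for r
    using assms by (simp add: posterior_gauss_pin_eq_sigm)
  define lsq where
    "lsq = (\<lambda>\<theta>. \<Sum>i<n. posterior \<gamma> \<alpha> (gauss_pin C \<sigma>) (res (xs i) \<theta>t) * (res (xs i) \<theta>)\<^sup>2)"
  have "argmax_set (em_objective \<gamma> \<alpha> (gauss_pin C \<sigma>) res xs n \<theta>t) = argmin_set lsq"
    unfolding em_objective_gauss_pin[OF \<open>0 < \<gamma>\<close> \<open>0 < C\<close>] lsq_def
    by (rule argmax_set_const_minus_scale) (use \<open>0 < \<sigma>\<close> in auto)
  moreover have "irls_objective (rho_tau \<tau> \<sigma>) res xs n \<theta>t = (\<lambda>\<theta>. 1 / \<sigma>\<^sup>2 * lsq \<theta>)"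
    using assms(9) \<open>0 < \<sigma>\<close>
    by (simp add: irls_objective_def[abs_def] lsq_def irls_weight_rho_tau post sum_distrib_left)
  then have "argmin_set (irls_objective (rho_tau \<tau> \<sigma>) res xs n \<theta>t) = argmin_set lsq"
    using argmin_set_scale[of "1 / \<sigma>\<^sup>2" lsq] \<open>0 < \<sigma>\<close> by simp
  ultimately show ?thesis
    using post by (simp add: lsq_def)
qed

end
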